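(* Let $K\subseteq L$ be real closed fields, and $C$ an additive cut in $L$. Let $C'$ and $C'_{\mathrm{mlt}}$ be the cuts induced on $K$ by $C$ and $C_{\mathrm{mlt}}$ respectively, i.e. $C'=(C^-\cap K,C^+\cap K)$ and $C'_{\mathrm{mlt}}=((C_{\mathrm{mlt}})^-\cap K,(C_{\mathrm{mlt}})^+\cap K)$. Suppose that $C'_{\mathrm{mlt}}=(C')_{\mathrm{mlt}}$, and that $x,y\in L$ are two realizations of the cut $C'$ of $K$, with $x\in C^-$ and $y\in C^+$. Then $y/x$ induces the cut $C'_{\mathrm{mlt}}$ on $K$; that is, $(C'_{\mathrm{mlt}})^-=\{a\in K: a<y/x\}$ and $(C'_{\mathrm{mlt}})^+=\{a\in K: a\ge y/x\}$.
   Context: A cut of an ordered field $F$ is a pair $C=(C^-,C^+)$ with $F=C^-\cup C^+$ disjoint and $C^-<C^+$. $F_+=\{c\in F: c>0\}$. A cut $C$ of $F$ is additive if $C^-$ is closed under addition and contains some positive element. For a cut $C$ of $F$, $C_{\mathrm{mlt}}$ is the cut of $F$ whose left side is $\{r\in F: r\cdot(C^-\cap F_+)\subseteq C^-\}$ (and whose right side is the complement). An element $a$ of an extension field realizes a cut $D$ of $K$ if $D^-=\{c\in K:c<a\}$ and $D^+=\{c\in K:c>a\}$. *)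

theory Defs
  imports "HOL-Computational_Algebra.Polynomial"
begin

text \<open>An ordered field is represented by a type of class linordered_field; a subfield K
  of it by a subset.\<close>

definition subfield :: "'a::linordered_field set \<Rightarrow> bool" where
  "subfield K \<longleftrightarrow> 0 \<in> K \<and> 1 \<in> K \<and> (\<forall>a\<in>K. \<forall>b\<in>K. a + b \<in> K \<and> a * b \<in> K)
     \<and> (\<forall>a\<in>K. - a \<in> K) \<and> (\<forall>a\<in>K. a \<noteq> 0 \<longrightarrow> inverse a \<in> K)"

definition real_closed_subfield :: "'a::linordered_field set \<Rightarrow> bool" where
  "real_closed_subfield K \<longleftrightarrow> subfield K
     \<and> (\<forall>a\<in>K. a > 0 \<longrightarrow> (\<exists>b\<in>K. b * b = a))
     \<and> (\<forall>p :: 'a poly. odd (degree p) \<longrightarrow> (\<forall>i. coeff p i \<in> K) \<longrightarrow> (\<exists>x\<in>K. poly p x = 0))"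

definition is_cut :: "'a::linordered_field set \<Rightarrow> 'a set \<times> 'a set \<Rightarrow> bool" where
  "is_cut F C \<longleftrightarrow> fst C \<union> snd C = F \<and> fst C \<inter> snd C = {}
     \<and> (\<forall>a\<in>fst C. \<forall>b\<in>snd C. a < b)"

definition additive_cut :: "'a::linordered_field set \<Rightarrow> 'a set \<times> 'a set \<Rightarrow> bool" where
  "additive_cut F C \<longleftrightarrow> is_cut F C
     \<and> (\<forall>a\<in>fst C. \<forall>b\<in>fst C. a + b \<in> fst C) \<and> (\<exists>a\<in>fst C. a > 0)"

definition mlt_cut :: "'a::linordered_field set \<Rightarrow> 'a set \<times> 'a set \<Rightarrow> 'a set \<times> 'a set" where
  "mlt_cut F C = (let M = {r\<in>F. \<forall>c\<in>fst C \<inter> {c\<in>F. c > 0}. r * c \<in> fst C} in (M, F - M))"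

definition restrict_cut :: "'a set \<Rightarrow> 'a set \<times> 'a set \<Rightarrow> 'a set \<times> 'a set" where
  "restrict_cut K C = (fst C \<inter> K, snd C \<inter> K)"

definition realizes :: "'a::linordered_field \<Rightarrow> 'a set \<Rightarrow> 'a set \<times> 'a set \<Rightarrow> bool" where
  "realizes a K D \<longleftrightarrow> fst D = {c\<in>K. c < a} \<and> snd D = {c\<in>K. c > a}"

end

theory Submission
  imports Defs
begin

text \<open>Since \<open>0\<close> lies below the additive cut, the realization \<open>x \<in> C\<^sup>-\<close> is positive. If
  \<open>a \<in> (C\<^sub>m\<^sub>l\<^sub>t)\<^sup>-\<close> then \<open>a x \<in> C\<^sup>-\<close>, so \<open>a x < y\<close>. Conversely let \<open>a \<in> K\<close> with \<open>a < y/x\<close>, and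
  \<open>c \<in> K\<close> with \<open>0 < c\<close> in \<open>C'\<^sup>-\<close>, i.e. \<open>c < x\<close>. Then \<open>a c < a x < y\<close>, and since \<open>a c \<in> K\<close> and
  \<open>y\<close> realizes \<open>C'\<close>, \<open>a c \<in> C'\<^sup>-\<close>; thus \<open>a \<in> (C')\<^sub>m\<^sub>l\<^sub>t\<^sup>- = (C'\<^sub>m\<^sub>l\<^sub>t)\<^sup>-\<close>.\<close>

lemma real_closed_subfield_imp_subfield: "real_closed_subfield K \<Longrightarrow> subfield K"
  unfolding real_closed_subfield_def by blast

lemma subfield_zero: "subfield K \<Longrightarrow> 0 \<in> K"
  unfolding subfield_def by blast

lemma subfield_mult: "subfield K \<Longrightarrow> a \<in> K \<Longrightarrow> b \<in> K \<Longrightarrow> a * b \<in> K"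
  unfolding subfield_def by blast

lemma is_cut_lower_downward_closed:
  assumes "is_cut F C" and "a \<in> fst C" and "b \<in> F" and "b \<le> a"
  shows "b \<in> fst C"
  using assms unfolding is_cut_def by (metis IntI UnE empty_iff not_le)

lemma additive_cut_zero_lower:
  assumes "additive_cut F C" and "0 \<in> F"
  shows "0 \<in> fst C"
proof -
  obtain a where "a \<in> fst C" "0 < a"
    using assms(1) unfolding additive_cut_def by blast
  with assms show ?thesis
    unfolding additive_cut_def by (blast intro: is_cut_lower_downward_closed less_imp_le)
qed

lemma fst_mlt_cut: "fst (mlt_cut F C) = {r \<in> F. \<forall>c\<in>fst C. c \<in> F \<longrightarrow> 0 < c \<longrightarrow> r * c \<in> fst C}"
  unfolding mlt_cut_def Let_def by auto

lemma snd_mlt_cut: "snd (mlt_cut F C) = F - fst (mlt_cut F C)"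
  unfolding mlt_cut_def Let_def by simp

lemma realizes_lower_iff: "realizes x K D \<Longrightarrow> c \<in> fst D \<longleftrightarrow> c \<in> K \<and> c < x"
  unfolding realizes_def by blast

lemma mlt_cut_lower_less_quotient:
  assumes "is_cut F C" and "a \<in> fst (mlt_cut F C)"
    and "x \<in> fst C" and "0 < x" and "y \<in> snd C"
  shows "a < y / x"
proof -
  have "x \<in> F" using assms(1,3) unfolding is_cut_def by blast
  with assms(2-4) have "a * x \<in> fst C" by (simp add: fst_mlt_cut)
  with assms(1,5) have "a * x < y" unfolding is_cut_def by blast
  with assms(4) show ?thesis by (simp add: pos_less_divide_eq)
qed

lemma quotient_of_realizations_bounds_mlt_cut:
  assumes "subfield K" and "realizes x K D" and "realizes y K D" and "0 < x"
    and "a \<in> K" and "a < y / x"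
  shows "a \<in> fst (mlt_cut K D)"
proof -
  have "0 \<in> fst D" using assms(1,2,4) by (simp add: realizes_lower_iff subfield_zero)
  then have "0 < y" using assms(3) by (simp add: realizes_lower_iff)
  have "a * c \<in> fst D" if "c \<in> fst D" and "0 < c" for c
  proof -
    have "c \<in> K" "c < x" using that(1) assms(2) by (simp_all add: realizes_lower_iff)
    have "a * x < y" using assms(4,6) by (simp add: pos_less_divide_eq)
    moreover have "a * c < y"
    proof (cases "0 < a")
      case True
      with \<open>c < x\<close> have "a * c < a * x" by simp
      with \<open>a * x < y\<close> show ?thesis by simp
    next
      case False
      with \<open>0 < c\<close> have "a * c \<le> 0" by (simp add: mult_nonpos_nonneg)
      with \<open>0 < y\<close> show ?thesis by simp
    qed
    moreover have "a * c \<in> K" using assms(1,5) \<open>c \<in> K\<close> by (rule subfield_mult)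
    ultimately show ?thesis using assms(3) by (simp add: realizes_lower_iff)
  qed
  with assms(5) show ?thesis by (simp add: fst_mlt_cut)
qed

theorem lemma2p10:
  fixes K :: "'a::linordered_field set" and C :: "'a set \<times> 'a set" and x y :: 'a
  assumes "real_closed_subfield (UNIV :: 'a set)"
    and "real_closed_subfield K"
    and "additive_cut UNIV C"
    and "restrict_cut K (mlt_cut UNIV C) = mlt_cut K (restrict_cut K C)"
    and "realizes x K (restrict_cut K C)"
    and "realizes y K (restrict_cut K C)"
    and "x \<in> fst C" and "y \<in> snd C"
  shows "fst (restrict_cut K (mlt_cut UNIV C)) = {a\<in>K. a < y / x}
       \<and> snd (restrict_cut K (mlt_cut UNIV C)) = {a\<in>K. a \<ge> y / x}"
proof -
  have K: "subfield K" using assms(2) by (rule real_closed_subfield_imp_subfield)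
  have cut: "is_cut UNIV C" using assms(3) unfolding additive_cut_def by blast
  have "0 \<in> fst (restrict_cut K C)"
    using assms(3) K by (simp add: restrict_cut_def additive_cut_zero_lower subfield_zero)
  with assms(5) have "0 < x" by (simp add: realizes_lower_iff)
  have lower: "a \<in> fst (mlt_cut UNIV C) \<longleftrightarrow> a < y / x" if "a \<in> K" for a
  proof
    assume "a \<in> fst (mlt_cut UNIV C)"
    from cut this assms(7) \<open>0 < x\<close> assms(8) show "a < y / x"
      by (rule mlt_cut_lower_less_quotient)
  next
    assume "a < y / x"
    from K assms(5,6) \<open>0 < x\<close> \<open>a \<in> K\<close> this
    have "a \<in> fst (mlt_cut K (restrict_cut K C))" by (rule quotient_of_realizations_bounds_mlt_cut)
    then show "a \<in> fst (mlt_cut UNIV C)"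
      using assms(4) by (metis IntE restrict_cut_def fst_conv)
  qed
  show ?thesis
    unfolding restrict_cut_def snd_mlt_cut using lower by auto
qed

end
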